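(* Consider the finite-agent foraging swarm with $n$ agents and the mean field foraging swarm, both described in the context and both using the same parameters $\rho,\varepsilon,\lambda\in(0,1)$, $r>0$. Let $\hat q(t,n)$ be the vector of agent proportions of the $n$-agent system, and let $y(t)$ be the state of the mean field system. Then for every $t\ge 0$, almost surely, $$\lim_{n\to\infty}\big(\hat q(0,n),\hat q(1,n),\dots,\hat q(t,n)\big)=\big(y(0),y(1),\dots,y(t)\big).$$ In particular, $\lim_{n\to\infty}\hat q(t,n)=y(t)$ almost surely for every $t\ge0$.
   Context: Let $\mathcal G=(\mathcal V,\mathcal E)$ be a finite, undirected, connected graph without self-loops that contains at least one cycle of odd length. Let $A$ be its adjacency matrix and $D_A$ the diagonal matrix of vertex degrees. Let $\mathcal S\neq\mathcal T\in\mathcal V$ be two vertices at graph distance greater than $1$. For $u\in\mathbb R^{\mathcal V}_{\ge 0}$, define the weight matrix $W(u)$ by $W(u)_{ij}=u_j$ if $(ij)\in\mathcal E$ and $0$ otherwise. Define the gradient matrix $P^\nabla(u)$ by $$P^\nabla(u)_{ji}=\begin{cases}1/m_i & \text{if } W(u)_{ij}=\max_l W(u)_{il},\\ 0 & \text{otherwise,}\end{cases}$$ where $m_i$ is the number of indices $l$ attaining $\max_l W(u)_{il}$. For $\varepsilon\in[0,1]$, the $\varepsilon$-greedy matrix is $P(u,\varepsilon)=\varepsilon(D_A^{-1}A)^T+(1-\varepsilon)P^\nabla(u)$, which is column stochastic. Doubled state space: vectors in $\mathbb R^{2|\mathcal V|}$ are indexed by pairs $(v,c)$ with $v\in\mathcal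 V$ and $c\in\{1,2\}$, and written in block form $z=(z^1,z^2)$. Let $S$ and $T$ be the $|\mathcal V|\times|\mathcal V|$ diagonal matrices with a single entry $1$ at $\mathcal S$ and at $\mathcal T$ respectively. For $w=(w^1,w^2)$, set $$P^f(w,\varepsilon)=\begin{pmatrix}(I-T)P(w^2,\varepsilon) & S\,P(w^1,\varepsilon)\\ T\,P(w^2,\varepsilon) & (I-S)P(w^1,\varepsilon)\end{pmatrix},$$ which is column stochastic. Let $\gamma_{(v,c)}=r$ if $v\in\{\mathcal S,\mathcal T\}$ and $0$ otherwise, and let $\Gamma=\mathrm{diag}(\gamma)$. Let $V(w)$ be the diagonal matrix with entries $V(w)_{(i,c),(i,c)}=\max_{j:(ij)\in\mathcal E}w^c_j$. The reward matrix is $R(w)=I+\Gamma+\lambda V(w)$. The function $\mathrm{sgn}$ acts componentwise, with $\mathrm{sgn}(0)=0$. Fix parameters $\rho,\varepsilon,\lambda\in(0,1)$ and $r>0$. Mean field foraging swarm: $y(0)$ is the indicator vector of $(\mathcal S,1)$, $w(0)=0$, and $$y(t+1)=P^f(w(t),\varepsilon)\,y(t),\qquad w(t+1)=(1-\rho)w(t)+\rho R(w(t))\,\mathrm{sgn}(y(t)).$$ Finite-agent foraging swarm: there are $n$ agents with positions $x_a(t)$ in the doubled index set, and all start at $x_a(0)=(\mathcal S,1)$. Write $\hat q(t,n)_{(v,c)}=\frac1n|\{a:x_a(t)=(v,c)\}|$. The weights evolve by $\hat w(0)=0$ and $\hat w(t+1)=(1-\rho)\hat w(t)+\rho R(\hat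 w(t))\,\mathrm{sgn}(\hat q(t,n))$. Given the history up to time $t$, each agent independently moves from $i$ to $j$ with probability $P^f(\hat w(t),\varepsilon)_{ji}$. *)

theory Defs
  imports "HOL-Probability.Probability"
begin

definition sym_graph :: "('v \<Rightarrow> 'v \<Rightarrow> bool) \<Rightarrow> bool" where
  "sym_graph E \<longleftrightarrow> (\<forall>i j. E i j \<longrightarrow> E j i) \<and> (\<forall>i. \<not> E i i)"

definition graph_connected :: "('v \<Rightarrow> 'v \<Rightarrow> bool) \<Rightarrow> bool" where
  "graph_connected E \<longleftrightarrow> (\<forall>u v. E\<^sup>*\<^sup>* u v)"

definition is_cycle :: "('v \<Rightarrow> 'v \<Rightarrow> bool) \<Rightarrow> 'v list \<Rightarrow> bool" where
  "is_cycle E cs \<longleftrightarrow> length cs \<ge> 3 \<and> distinct cs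
     \<and> (\<forall>k. Suc k < length cs \<longrightarrow> E (cs ! k) (cs ! Suc k))
     \<and> E (last cs) (hd cs)"

definition has_odd_cycle :: "('v \<Rightarrow> 'v \<Rightarrow> bool) \<Rightarrow> bool" where
  "has_odd_cycle E \<longleftrightarrow> (\<exists>cs. is_cycle E cs \<and> odd (length cs))"

definition deg :: "('v::finite \<Rightarrow> 'v \<Rightarrow> bool) \<Rightarrow> 'v \<Rightarrow> nat" where
  "deg E i = card {j. E i j}"

section \<open>Matrices (as functions: M j i = entry in row j, column i)\<close>

definition Wm :: "('v \<Rightarrow> 'v \<Rightarrow> bool) \<Rightarrow> ('v \<Rightarrow> real) \<Rightarrow> 'v \<Rightarrow> 'v \<Rightarrow> real" where
  "Wm E u i j = (if E i j then u j else 0)"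

text \<open>Gradient matrix: Pgrad E u j i = P^nabla(u)_{ji}; the maximum is over all l, literally.\<close>
definition Pgrad :: "('v::finite \<Rightarrow> 'v \<Rightarrow> bool) \<Rightarrow> ('v \<Rightarrow> real) \<Rightarrow> 'v \<Rightarrow> 'v \<Rightarrow> real" where
  "Pgrad E u j i =
     (let M = Max (range (Wm E u i)) in
      if Wm E u i j = M then 1 / real (card {l. Wm E u i l = M}) else 0)"

definition Peps :: "('v::finite \<Rightarrow> 'v \<Rightarrow> bool) \<Rightarrow> real \<Rightarrow> ('v \<Rightarrow> real) \<Rightarrow> 'v \<Rightarrow> 'v \<Rightarrow> real" where
  "Peps E \<epsilon> u j i = \<epsilon> * (if E i j then 1 / real (deg E i) else 0) + (1 - \<epsilon>) * Pgrad E u j i"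

datatype copy = C1 | C2

type_synonym 'v st = "'v \<times> copy"

definition blk :: "('v st \<Rightarrow> real) \<Rightarrow> copy \<Rightarrow> 'v \<Rightarrow> real" where
  "blk w c = (\<lambda>j. w (j, c))"

text \<open>Pf E S T eps w (j,c') (i,c) = entry of P^f(w,eps) in row (j,c'), column (i,c).\<close>
definition Pf :: "('v::finite \<Rightarrow> 'v \<Rightarrow> bool) \<Rightarrow> 'v \<Rightarrow> 'v \<Rightarrow> real \<Rightarrow> ('v st \<Rightarrow> real)
                   \<Rightarrow> 'v st \<Rightarrow> 'v st \<Rightarrow> real" where
  "Pf E S T \<epsilon> w x y =
     (case (x, y) of
        ((j, C1), (i, C1)) \<Rightarrow> (if j = T then 0 else 1) * Peps E \<epsilon> (blk w C2) j i
      | ((j, C1), (i, C2)) \<Rightarrow> (if j = S then 1 else 0) * Peps E \<epsilon> (blk w C1) j i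
      | ((j, C2), (i, C1)) \<Rightarrow> (if j = T then 1 else 0) * Peps E \<epsilon> (blk w C2) j i
      | ((j, C2), (i, C2)) \<Rightarrow> (if j = S then 0 else 1) * Peps E \<epsilon> (blk w C1) j i)"

definition gam :: "'v \<Rightarrow> 'v \<Rightarrow> real \<Rightarrow> 'v st \<Rightarrow> real" where
  "gam S T r x = (if fst x = S \<or> fst x = T then r else 0)"

definition Vd :: "('v \<Rightarrow> 'v \<Rightarrow> bool) \<Rightarrow> ('v st \<Rightarrow> real) \<Rightarrow> 'v st \<Rightarrow> real" where
  "Vd E w x = Max {w (j, snd x) | j. E (fst x) j}"

text \<open>Diagonal reward matrix R(w) = I + Gamma + lambda V(w), as its diagonal.\<close>
definition Rd :: "('v \<Rightarrow> 'v \<Rightarrow> bool) \<Rightarrow> 'v \<Rightarrow> 'v \<Rightarrow> real \<Rightarrow> real \<Rightarrow> ('v st \<Rightarrow> real) \<Rightarrow> 'v st \<Rightarrow> real" where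
  "Rd E S T r lam w x = 1 + gam S T r x + lam * Vd E w x"

primrec wtraj :: "('v \<Rightarrow> 'v \<Rightarrow> bool) \<Rightarrow> 'v \<Rightarrow> 'v \<Rightarrow> real \<Rightarrow> real \<Rightarrow> real
                   \<Rightarrow> (nat \<Rightarrow> 'v st \<Rightarrow> real) \<Rightarrow> nat \<Rightarrow> 'v st \<Rightarrow> real" where
  "wtraj E S T r lam \<rho> q 0 = (\<lambda>x. 0)"
| "wtraj E S T r lam \<rho> q (Suc t) =
     (\<lambda>x. (1 - \<rho>) * wtraj E S T r lam \<rho> q t x
          + \<rho> * Rd E S T r lam (wtraj E S T r lam \<rho> q t) x * sgn (q t x))"

text \<open>Returns the pair (y(t), w(t)).\<close>
primrec mf :: "('v::finite \<Rightarrow> 'v \<Rightarrow> bool) \<Rightarrow> 'v \<Rightarrow> 'v \<Rightarrow> real \<Rightarrow> real \<Rightarrow> real \<Rightarrow> real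
               \<Rightarrow> nat \<Rightarrow> ('v st \<Rightarrow> real) \<times> ('v st \<Rightarrow> real)" where
  "mf E S T r lam \<rho> \<epsilon> 0 = ((\<lambda>x. if x = (S, C1) then 1 else 0), (\<lambda>x. 0))"
| "mf E S T r lam \<rho> \<epsilon> (Suc t) =
     (let (y, w) = mf E S T r lam \<rho> \<epsilon> t in
       ((\<lambda>x. \<Sum>z\<in>UNIV. Pf E S T \<epsilon> w x z * y z),
        (\<lambda>x. (1 - \<rho>) * w x + \<rho> * Rd E S T r lam w x * sgn (y x))))"

definition mf_y where "mf_y E S T r lam \<rho> \<epsilon> t = fst (mf E S T r lam \<rho> \<epsilon> t)"

text \<open>Empirical proportions of a history h (agent a, time s) with n agents.\<close>
definition qemp :: "nat \<Rightarrow> (nat \<Rightarrow> nat \<Rightarrow> 'v st) \<Rightarrow> nat \<Rightarrow> 'v st \<Rightarrow> real" where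
  "qemp n h s x = real (card {a. a < n \<and> h a s = x}) / real n"

text \<open>Joint law of the n-agent system: probability of the path history h on times 0..t,
  i.e. all agents start at (S,1), and given the history agents move independently
  with transition probabilities Pf(what(s)), what computed from the empirical proportions.\<close>
definition path_prob :: "('v::finite \<Rightarrow> 'v \<Rightarrow> bool) \<Rightarrow> 'v \<Rightarrow> 'v \<Rightarrow> real \<Rightarrow> real \<Rightarrow> real \<Rightarrow> real
                          \<Rightarrow> nat \<Rightarrow> nat \<Rightarrow> (nat \<Rightarrow> nat \<Rightarrow> 'v st) \<Rightarrow> real" where
  "path_prob E S T r lam \<rho> \<epsilon> n t h =
     (\<Prod>a<n. (if h a 0 = (S, C1) then 1 else 0) *
        (\<Prod>s<t. Pf E S T \<epsilon> (wtraj E S T r lam \<rho> (qemp n h) s) (h a (Suc s)) (h a s)))"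

text \<open>X n a s is the position of agent a (a < n) at time s in the n-agent system,
  all systems (n = 0,1,2,...) living on a common probability space M.\<close>
definition is_foraging_swarm ::
  "'a measure \<Rightarrow> ('v::finite \<Rightarrow> 'v \<Rightarrow> bool) \<Rightarrow> 'v \<Rightarrow> 'v \<Rightarrow> real \<Rightarrow> real \<Rightarrow> real \<Rightarrow> real
    \<Rightarrow> (nat \<Rightarrow> nat \<Rightarrow> nat \<Rightarrow> 'a \<Rightarrow> 'v st) \<Rightarrow> bool" where
  "is_foraging_swarm M E S T r lam \<rho> \<epsilon> X \<longleftrightarrow>
     (\<forall>n a s. X n a s \<in> measurable M (count_space UNIV)) \<and>
     (\<forall>n t h. measure M {\<omega> \<in> space M. \<forall>a<n. \<forall>s\<le>t. X n a s \<omega> = h a s}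
                = path_prob E S T r lam \<rho> \<epsilon> n t h)"

definition qhat :: "(nat \<Rightarrow> nat \<Rightarrow> nat \<Rightarrow> 'a \<Rightarrow> 'v st) \<Rightarrow> nat \<Rightarrow> nat \<Rightarrow> 'a \<Rightarrow> 'v st \<Rightarrow> real" where
  "qhat X n t \<omega> = qemp n (\<lambda>a s. X n a s \<omega>) t"

end

theory Submission
  imports Defs
begin

(* The weights of both swarms depend on the occupation vector only through its signs. Hence, on
   histories whose empirical occupation has had the sign pattern of the mean field y at all earlier
   times, the n-agent law is that of n independent Markov chains driven by the mean-field kernels
   (path_prob_eq_prod_wmf), whose one-time marginals are y. A Chernoff bound for these independent
   chains makes a deviation of size delta at the first time of disagreement exponentially unlikely
   in n; for delta below the smallest positive entry of y up to time t, closeness also forces equal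
   signs, while states with y = 0 are never visited. A union bound over the first failure time and
   Borel-Cantelli give eventual delta-closeness almost surely, and delta = 1/(k+1), k = 0, 1, ...
   gives convergence. Only connectivity (so that P^f is column stochastic) and 0 < eps < 1 are
   used. *)

lemma UNIV_copy: "(UNIV :: copy set) = {C1, C2}"
  by (auto intro: copy.exhaust)

instance copy :: finite
  by standard (metis UNIV_copy finite.emptyI finite.insertI)

lemma sum_UNIV_st:
  "(\<Sum>x\<in>(UNIV :: 'v::finite st set). f x) = (\<Sum>j\<in>UNIV. f (j, C1) + f (j, C2))"
  by (simp add: UNIV_Times_UNIV[symmetric] sum.cartesian_product' UNIV_copy)

lemma Pgrad_nonneg: "0 \<le> Pgrad E u j i"
  by (simp add: Pgrad_def Let_def)

lemma sum_Pgrad: "(\<Sum>j\<in>UNIV. Pgrad E u j i) = 1"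
proof -
  define m where "m = Max (range (Wm E u i))"
  have "m \<in> range (Wm E u i)" unfolding m_def by (rule Max_in) auto
  then have "{l. Wm E u i l = m} \<noteq> {}" by auto
  moreover have "(\<Sum>j\<in>UNIV. Pgrad E u j i)
      = real (card {l. Wm E u i l = m}) / real (card {l. Wm E u i l = m})"
    by (simp add: Pgrad_def Let_def m_def[symmetric] sum.If_cases)
  ultimately show ?thesis by (simp add: card_eq_0_iff)
qed

lemma Peps_nonneg: "0 \<le> \<epsilon> \<Longrightarrow> \<epsilon> \<le> 1 \<Longrightarrow> 0 \<le> Peps E \<epsilon> u j i"
  unfolding Peps_def using Pgrad_nonneg[of E u j i] by auto

lemma sum_Peps:
  assumes "deg E i > 0"
  shows "(\<Sum>j\<in>UNIV. Peps E \<epsilon> u j i) = 1"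
proof -
  have "(\<Sum>j\<in>UNIV. if E i j then 1 / real (deg E i) else 0) = 1"
    using assms by (simp add: sum.If_cases deg_def card_gt_0_iff)
  then show ?thesis
    by (simp add: Peps_def sum.distrib sum_distrib_left[symmetric] sum_Pgrad)
qed

lemma Pf_nonneg: "0 \<le> \<epsilon> \<Longrightarrow> \<epsilon> \<le> 1 \<Longrightarrow> 0 \<le> Pf E S T \<epsilon> w x z"
  unfolding Pf_def using Peps_nonneg by (auto split: prod.split copy.split)

lemma sum_Pf:
  assumes "\<And>i. deg E i > 0"
  shows "(\<Sum>x\<in>UNIV. Pf E S T \<epsilon> w x z) = 1"
proof -
  obtain i c where z: "z = (i, c)" by (cases z)
  define c' where "c' = (case c of C1 \<Rightarrow> C2 | C2 \<Rightarrow> C1)"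
  have "(\<Sum>x\<in>UNIV. Pf E S T \<epsilon> w x z) = (\<Sum>j\<in>UNIV. Peps E \<epsilon> (blk w c') j i)"
    by (subst sum_UNIV_st) (cases c; auto simp: z c'_def Pf_def intro!: sum.cong)
  also have "\<dots> = 1" by (rule sum_Peps[OF assms])
  finally show ?thesis .
qed

lemma connected_deg_pos:
  fixes E :: "'v::finite \<Rightarrow> 'v \<Rightarrow> bool"
  assumes "graph_connected E" and "(S::'v) \<noteq> T"
  shows "deg E i > 0"
proof -
  obtain j where "j \<noteq> i" using assms(2) by metis
  moreover have "E\<^sup>*\<^sup>* i j" using assms(1) by (simp add: graph_connected_def)
  ultimately obtain k where "E i k" by (metis converse_rtranclpE)
  then show ?thesis by (auto simp: deg_def card_gt_0_iff)
qed

lemma mf_y_0: "mf_y E S T r lam \<rho> \<epsilon> 0 = (\<lambda>x. if x = (S, C1) then 1 else 0)"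
  by (simp add: mf_y_def)

lemma mf_y_Suc:
  "mf_y E S T r lam \<rho> \<epsilon> (Suc t) =
     (\<lambda>x. \<Sum>z\<in>UNIV. Pf E S T \<epsilon> (snd (mf E S T r lam \<rho> \<epsilon> t)) x z * mf_y E S T r lam \<rho> \<epsilon> t z)"
  by (simp add: mf_y_def Let_def case_prod_unfold)

lemma snd_mf_eq_wtraj: "snd (mf E S T r lam \<rho> \<epsilon> t) = wtraj E S T r lam \<rho> (mf_y E S T r lam \<rho> \<epsilon>) t"
  by (induction t) (simp_all add: mf_y_def Let_def case_prod_unfold)

lemma wtraj_cong_sgn:
  "(\<And>j x. j < i \<Longrightarrow> sgn (q j x) = sgn (q' j x)) \<Longrightarrow> wtraj E S T r lam \<rho> q i = wtraj E S T r lam \<rho> q' i"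
  by (induction i) auto

definition path_weight :: "(nat \<Rightarrow> 'b \<Rightarrow> 'b \<Rightarrow> real) \<Rightarrow> 'b \<Rightarrow> nat \<Rightarrow> (nat \<Rightarrow> 'b) \<Rightarrow> real" where
  "path_weight K x0 s p = (if p 0 = x0 then 1 else 0) * (\<Prod>i<s. K i (p (Suc i)) (p i))"

primrec chain_dist :: "(nat \<Rightarrow> 'b \<Rightarrow> 'b \<Rightarrow> real) \<Rightarrow> 'b \<Rightarrow> nat \<Rightarrow> 'b \<Rightarrow> real" where
  "chain_dist K x0 0 = (\<lambda>x. if x = x0 then 1 else 0)"
| "chain_dist K x0 (Suc s) = (\<lambda>x. \<Sum>z\<in>UNIV. K s x z * chain_dist K x0 s z)"

lemma path_weight_nonneg: "(\<And>i x z. 0 \<le> K i x z) \<Longrightarrow> 0 \<le> path_weight K x0 s p"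
  unfolding path_weight_def by (auto intro: prod_nonneg)

lemma path_weight_extend: "path_weight K x0 (Suc s) (p(Suc s := x)) = path_weight K x0 s p * K s x (p s)"
proof -
  have "(\<Prod>i<s. K i ((p(Suc s := x)) (Suc i)) ((p(Suc s := x)) i)) = (\<Prod>i<s. K i (p (Suc i)) (p i))"
    by (intro prod.cong) auto
  then show ?thesis by (simp add: path_weight_def)
qed

lemma sum_path_weight_endpoint:
  fixes K :: "nat \<Rightarrow> 'b::finite \<Rightarrow> 'b \<Rightarrow> real"
  shows "(\<Sum>p\<in>PiE {..s} (\<lambda>_. UNIV). path_weight K x0 s p * f (p s)) = (\<Sum>x\<in>UNIV. chain_dist K x0 s x * f x)"
proof (induction s arbitrary: f)
  case 0
  show ?case
    by (rule sum.reindex_bij_witness[of _ "\<lambda>x. (\<lambda>i\<in>{..0}. x)" "\<lambda>p. p 0"])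
       (auto simp: path_weight_def PiE_def extensional_def)
next
  case (Suc s)
  have "(\<Sum>p\<in>PiE {..Suc s} (\<lambda>_. UNIV). path_weight K x0 (Suc s) p * f (p (Suc s)))
      = (\<Sum>(x, p)\<in>UNIV \<times> PiE {..s} (\<lambda>_. UNIV). path_weight K x0 s p * K s x (p s) * f x)"
    by (rule sum.reindex_bij_witness[of _ "\<lambda>(x, p). p(Suc s := x)" "\<lambda>p. (p (Suc s), p(Suc s := undefined))"])
       (auto simp: PiE_def extensional_def path_weight_extend[symmetric] fun_upd_idem)
  also have "\<dots> = (\<Sum>p\<in>PiE {..s} (\<lambda>_. UNIV). path_weight K x0 s p * (\<Sum>x\<in>UNIV. K s x (p s) * f x))"
    by (simp add: sum.cartesian_product[symmetric] sum_distrib_left mult.assoc) (rule sum.swap)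
  also have "\<dots> = (\<Sum>z\<in>UNIV. chain_dist K x0 s z * (\<Sum>x\<in>UNIV. K s x z * f x))"
    by (rule Suc.IH)
  also have "\<dots> = (\<Sum>x\<in>UNIV. chain_dist K x0 (Suc s) x * f x)"
    by (simp add: sum_distrib_left sum_distrib_right mult_ac) (rule sum.swap)
  finally show ?case .
qed

lemma sum_path_weight_endpoint_eq:
  fixes K :: "nat \<Rightarrow> 'b::finite \<Rightarrow> 'b \<Rightarrow> real"
  shows "sum (path_weight K x0 s) {p \<in> PiE {..s} (\<lambda>_. UNIV). p s = x} = chain_dist K x0 s x"
  using sum_path_weight_endpoint[of K x0 s "\<lambda>z. if z = x then 1 else 0"]
  by (simp add: sum.inter_filter finite_PiE if_distrib[of "(*) _"] cong: if_cong)

lemma sum_chain_dist: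
  fixes K :: "nat \<Rightarrow> 'b::finite \<Rightarrow> 'b \<Rightarrow> real"
  assumes "\<And>i z. (\<Sum>x\<in>UNIV. K i x z) = 1"
  shows "(\<Sum>x\<in>UNIV. chain_dist K x0 s x) = 1"
proof (induction s)
  case (Suc s)
  have "(\<Sum>x\<in>UNIV. chain_dist K x0 (Suc s) x) = (\<Sum>z\<in>UNIV. chain_dist K x0 s z * (\<Sum>x\<in>UNIV. K s x z))"
    by (simp add: sum_distrib_left mult_ac) (rule sum.swap)
  then show ?case by (simp add: assms Suc.IH)
qed simp

lemma sum_path_weight:
  fixes K :: "nat \<Rightarrow> 'b::finite \<Rightarrow> 'b \<Rightarrow> real"
  assumes "\<And>i z. (\<Sum>x\<in>UNIV. K i x z) = 1"
  shows "(\<Sum>p\<in>PiE {..s} (\<lambda>_. UNIV). path_weight K x0 s p) = 1"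
  using sum_path_weight_endpoint[of K x0 s "\<lambda>_. 1"] sum_chain_dist[OF assms] by simp

lemma sum_filter_add_compl:
  "finite P \<Longrightarrow> sum f {p \<in> P. A p} + sum f {p \<in> P. \<not> A p} = sum f P"
  by (subst sum.union_disjoint[symmetric]) (auto intro: sum.cong)

lemma card_filter_lessThan_add_compl: "card {a. a < n \<and> A a} + card {a. a < n \<and> \<not> A a} = n"
  using sum_filter_add_compl[of "{..<n}" "\<lambda>_. 1::nat" A] by simp

definition iid_prob :: "('p \<Rightarrow> real) \<Rightarrow> 'p set \<Rightarrow> nat \<Rightarrow> ((nat \<Rightarrow> 'p) \<Rightarrow> bool) \<Rightarrow> real" where
  "iid_prob \<pi> P n \<Phi> = (\<Sum>h\<in>PiE {..<n} (\<lambda>_. P). (\<Prod>a<n. \<pi> (h a)) * of_bool (\<Phi> h))"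

lemma iid_prob_le_sum:
  assumes nonneg: "\<And>p. p \<in> P \<Longrightarrow> 0 \<le> \<pi> p" and "finite X"
    and cover: "\<And>h. h \<in> PiE {..<n} (\<lambda>_. P) \<Longrightarrow> \<Phi> h \<Longrightarrow> \<exists>x\<in>X. \<Psi> x h"
  shows "iid_prob \<pi> P n \<Phi> \<le> (\<Sum>x\<in>X. iid_prob \<pi> P n (\<Psi> x))"
proof -
  have "iid_prob \<pi> P n \<Phi> \<le> (\<Sum>h\<in>PiE {..<n} (\<lambda>_. P). (\<Prod>a<n. \<pi> (h a)) * (\<Sum>x\<in>X. of_bool (\<Psi> x h)))"
    unfolding iid_prob_def
  proof (intro sum_mono mult_left_mono)
    fix h assume h: "h \<in> PiE {..<n} (\<lambda>_. P)"
    show "0 \<le> (\<Prod>a<n. \<pi> (h a))" using h nonneg by (auto intro!: prod_nonneg)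
    show "of_bool (\<Phi> h) \<le> (\<Sum>x\<in>X. of_bool (\<Psi> x h) :: real)"
    proof (cases "\<Phi> h")
      case True
      then obtain x where "x \<in> X" "\<Psi> x h" using cover h by blast
      then show ?thesis using member_le_sum[of x X "\<lambda>x. of_bool (\<Psi> x h) :: real"] \<open>finite X\<close> by simp
    qed (simp add: sum_nonneg)
  qed
  also have "\<dots> = (\<Sum>x\<in>X. iid_prob \<pi> P n (\<Psi> x))"
    unfolding iid_prob_def sum_distrib_left by (rule sum.swap)
  finally show ?thesis .
qed

lemma iid_prob_mono:
  assumes "\<And>p. p \<in> P \<Longrightarrow> 0 \<le> \<pi> p" and "\<And>h. h \<in> PiE {..<n} (\<lambda>_. P) \<Longrightarrow> \<Phi> h \<Longrightarrow> \<Psi> h"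
  shows "iid_prob \<pi> P n \<Phi> \<le> iid_prob \<pi> P n \<Psi>"
  using iid_prob_le_sum[of P \<pi> "{()}" n \<Phi> "\<lambda>_. \<Psi>"] assms by simp

lemma iid_prob_hits_null_set:
  assumes "finite P" and "\<And>p. p \<in> P \<Longrightarrow> 0 \<le> \<pi> p" and "sum \<pi> {p \<in> P. A p} = 0"
  shows "iid_prob \<pi> P n (\<lambda>h. \<exists>a<n. A (h a)) = 0"
  unfolding iid_prob_def
proof (intro sum.neutral ballI)
  fix h assume h: "h \<in> PiE {..<n} (\<lambda>_. P)"
  have "\<pi> p = 0" if "p \<in> P" "A p" for p
    using assms that by (subst (asm) sum_nonneg_eq_0_iff) auto
  then show "(\<Prod>a<n. \<pi> (h a)) * of_bool (\<exists>a<n. A (h a)) = 0"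
    using h by (auto intro: prod_zero)
qed

lemma iid_prob_count_ge_le:
  assumes "finite P" and nonneg: "\<And>p. p \<in> P \<Longrightarrow> 0 \<le> \<pi> p" and "sum \<pi> P = 1" and "0 \<le> l"
  shows "iid_prob \<pi> P n (\<lambda>h. k \<le> real (card {a. a < n \<and> A (h a)}))
     \<le> exp (- l * k) * (1 - sum \<pi> {p \<in> P. A p} + sum \<pi> {p \<in> P. A p} * exp l) ^ n"
proof -
  define g where "g p = (if A p then exp l else 1)" for p
  have markov: "of_bool (k \<le> real (card {a. a < n \<and> A (h a)})) \<le> exp (- l * k) * (\<Prod>a<n. g (h a))" for h
  proof -
    have "(\<Prod>a<n. g (h a)) = exp (l * real (card {a. a < n \<and> A (h a)}))"
      by (simp add: g_def prod.If_cases Int_def conj_commute exp_of_nat_mult[symmetric] mult.commute)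
    then have "exp (- l * k) * (\<Prod>a<n. g (h a)) = exp (l * (real (card {a. a < n \<and> A (h a)}) - k))"
      by (simp add: exp_add[symmetric] algebra_simps)
    then show ?thesis using \<open>0 \<le> l\<close> by simp
  qed
  have "iid_prob \<pi> P n (\<lambda>h. k \<le> real (card {a. a < n \<and> A (h a)}))
      \<le> (\<Sum>h\<in>PiE {..<n} (\<lambda>_. P). (\<Prod>a<n. \<pi> (h a)) * (exp (- l * k) * (\<Prod>a<n. g (h a))))"
    unfolding iid_prob_def using nonneg by (intro sum_mono mult_left_mono markov) (auto intro!: prod_nonneg)
  also have "\<dots> = exp (- l * k) * (\<Sum>h\<in>PiE {..<n} (\<lambda>_. P). \<Prod>a<n. \<pi> (h a) * g (h a))"
    by (simp add: sum_distrib_left prod.distrib mult_ac)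
  also have "(\<Sum>h\<in>PiE {..<n} (\<lambda>_. P). \<Prod>a<n. \<pi> (h a) * g (h a)) = (\<Prod>a<n. \<Sum>p\<in>P. \<pi> p * g p)"
    by (rule prod_sum_PiE[symmetric]) (use \<open>finite P\<close> in auto)
  also have "(\<Sum>p\<in>P. \<pi> p * g p) = 1 - sum \<pi> {p \<in> P. A p} + sum \<pi> {p \<in> P. A p} * exp l"
  proof -
    have "(\<Sum>p\<in>P. \<pi> p * g p) = (\<Sum>p\<in>{p \<in> P. A p}. \<pi> p * g p) + (\<Sum>p\<in>{p \<in> P. \<not> A p}. \<pi> p * g p)"
      by (rule sum_filter_add_compl[OF \<open>finite P\<close>, symmetric])
    also have "\<dots> = sum \<pi> {p \<in> P. A p} * exp l + sum \<pi> {p \<in> P. \<not> A p}"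
      by (auto simp: g_def sum_distrib_right intro!: arg_cong2[where f="(+)"] sum.cong)
    finally show ?thesis
      using sum_filter_add_compl[OF \<open>finite P\<close>, of \<pi> A] \<open>sum \<pi> P = 1\<close> by simp
  qed
  finally show ?thesis by simp
qed

lemma binomial_mgf_bound:
  fixes q \<delta> :: real
  assumes "0 \<le> q" "q \<le> 1" and "0 < \<delta>" "\<delta> \<le> 1"
  shows "exp (- (\<delta>/2) * (real n * (q + \<delta>))) * (1 - q + q * exp (\<delta>/2)) ^ n \<le> exp (- \<delta>\<^sup>2 / 4) ^ n"
proof -
  define l where "l = \<delta>/2"
  have l: "0 \<le> l" "l \<le> 1" using assms by (auto simp: l_def)
  have "1 - q + q * exp l \<le> 1 + q * (l + l\<^sup>2)"
    using exp_bound[OF l] mult_left_mono[of "exp l" "1 + l + l\<^sup>2" q] assms by (simp add: algebra_simps)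
  also have "\<dots> \<le> exp (q * (l + l\<^sup>2))" by (rule exp_ge_add_one_self)
  finally have "(1 - q + q * exp l) ^ n \<le> exp (q * (l + l\<^sup>2)) ^ n"
    using assms by (intro power_mono) (auto simp: add_nonneg_nonneg)
  also have "\<dots> = exp (real n * (q * (l + l\<^sup>2)))" by (simp add: exp_of_nat_mult[symmetric])
  finally have "exp (- l * (real n * (q + \<delta>))) * (1 - q + q * exp l) ^ n
      \<le> exp (- l * (real n * (q + \<delta>))) * exp (real n * (q * (l + l\<^sup>2)))" by simp
  also have "\<dots> = exp (real n * (q * l\<^sup>2 - l * \<delta>))"
    by (simp add: exp_add[symmetric] algebra_simps)
  also have "\<dots> \<le> exp (real n * (l\<^sup>2 - l * \<delta>))"
    using assms by (simp add: mult_left_mono mult_left_le_one_le)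
  also have "\<dots> = exp (- \<delta>\<^sup>2 / 4) ^ n"
    by (simp add: exp_of_nat_mult[symmetric] l_def power2_eq_square algebra_simps)
  finally show ?thesis by (simp add: l_def)
qed

lemma iid_prob_upper_tail:
  assumes "finite P" and "\<And>p. p \<in> P \<Longrightarrow> 0 \<le> \<pi> p" and "sum \<pi> P = 1" and "0 < \<delta>" "\<delta> \<le> 1"
  shows "iid_prob \<pi> P n (\<lambda>h. real n * (sum \<pi> {p \<in> P. A p} + \<delta>) \<le> real (card {a. a < n \<and> A (h a)}))
     \<le> exp (- \<delta>\<^sup>2 / 4) ^ n"
proof -
  have "sum \<pi> {p \<in> P. A p} \<le> sum \<pi> P"
    using assms by (intro sum_mono2) auto
  then have "0 \<le> sum \<pi> {p \<in> P. A p}" "sum \<pi> {p \<in> P. A p} \<le> 1"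
    using assms by (auto intro: sum_nonneg)
  then show ?thesis
    using iid_prob_count_ge_le[OF assms(1-3), of "\<delta>/2" n "real n * (sum \<pi> {p \<in> P. A p} + \<delta>)" A]
      binomial_mgf_bound[of "sum \<pi> {p \<in> P. A p}" \<delta> n] assms(4,5)
    by simp
qed

lemma abs_deviation_cases:
  fixes c c' p p' \<delta> n :: real
  assumes "c + c' = n" "p + p' = 1" "0 \<le> c" "0 \<le> c'" "\<delta> \<le> \<bar>c / n - p\<bar>"
  shows "n * (p + \<delta>) \<le> c \<or> n * (p' + \<delta>) \<le> c'"
proof (cases "n = 0")
  case False
  then have "0 < n" using assms by linarith
  from assms(5) consider "p + \<delta> \<le> c / n" | "c / n \<le> p - \<delta>" by linarith
  then show ?thesis
  proof cases
    case 1
    then show ?thesis using \<open>0 < n\<close> by (simp add: pos_le_divide_eq mult.commute)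
  next
    case 2
    then have "c \<le> n * (p - \<delta>)" using \<open>0 < n\<close> by (simp add: pos_divide_le_eq mult.commute)
    moreover have "n * p' = n - n * p" using assms(2) by (simp add: algebra_simps flip: eq_diff_eq)
    ultimately have "n * (p' + \<delta>) \<le> c'" using assms(1) by (simp add: algebra_simps)
    then show ?thesis ..
  qed
qed (use assms in simp)

lemma iid_prob_deviation:
  assumes "finite P" and "\<And>p. p \<in> P \<Longrightarrow> 0 \<le> \<pi> p" and "sum \<pi> P = 1" and "0 < \<delta>" "\<delta> \<le> 1"
  shows "iid_prob \<pi> P n (\<lambda>h. \<delta> \<le> \<bar>real (card {a. a < n \<and> A (h a)}) / real n - sum \<pi> {p \<in> P. A p}\<bar>)
     \<le> 2 * exp (- \<delta>\<^sup>2 / 4) ^ n"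
proof -
  have "iid_prob \<pi> P n (\<lambda>h. \<delta> \<le> \<bar>real (card {a. a < n \<and> A (h a)}) / real n - sum \<pi> {p \<in> P. A p}\<bar>)
      \<le> (\<Sum>b\<in>UNIV. iid_prob \<pi> P n (\<lambda>h. real n * (sum \<pi> {p \<in> P. A p = b} + \<delta>)
                                          \<le> real (card {a. a < n \<and> A (h a) = b})))"
  proof (rule iid_prob_le_sum)
    fix h assume dev: "\<delta> \<le> \<bar>real (card {a. a < n \<and> A (h a)}) / real n - sum \<pi> {p \<in> P. A p}\<bar>"
    have "real (card {a. a < n \<and> A (h a)}) + real (card {a. a < n \<and> \<not> A (h a)}) = real n"
      using card_filter_lessThan_add_compl[of n "\<lambda>a. A (h a)"] by (metis of_nat_add)
    moreover have "sum \<pi> {p \<in> P. A p} + sum \<pi> {p \<in> P. \<not> A p} = 1"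
      using sum_filter_add_compl[OF \<open>finite P\<close>, of \<pi> A] \<open>sum \<pi> P = 1\<close> by simp
    ultimately have "real n * (sum \<pi> {p \<in> P. A p} + \<delta>) \<le> real (card {a. a < n \<and> A (h a)})
        \<or> real n * (sum \<pi> {p \<in> P. \<not> A p} + \<delta>) \<le> real (card {a. a < n \<and> \<not> A (h a)})"
      using dev by (intro abs_deviation_cases) auto
    then show "\<exists>b\<in>UNIV. real n * (sum \<pi> {p \<in> P. A p = b} + \<delta>) \<le> real (card {a. a < n \<and> A (h a) = b})"
      by (simp add: ex_bool_eq)
  qed (use assms in auto)
  also have "\<dots> \<le> (\<Sum>b\<in>(UNIV :: bool set). exp (- \<delta>\<^sup>2 / 4) ^ n)"
    by (intro sum_mono iid_prob_upper_tail assms)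
  finally show ?thesis by simp
qed

lemma finite_pos_lower_bound:
  fixes f :: "'a \<Rightarrow> real"
  assumes "finite A"
  shows "\<exists>\<delta>>0. \<forall>a\<in>A. 0 < f a \<longrightarrow> \<delta> \<le> f a"
proof -
  let ?m = "Min (insert 1 (f ` {a \<in> A. 0 < f a}))"
  have "0 < ?m" "\<forall>a\<in>A. 0 < f a \<longrightarrow> ?m \<le> f a"
    using assms by auto
  then show ?thesis by blast
qed

lemma tendstoI_inverse_Suc:
  assumes "\<And>k::nat. eventually (\<lambda>n. dist (f n) l < inverse (real (Suc k))) F"
  shows "(f \<longlongrightarrow> l) F"
proof (rule tendstoI)
  fix e :: real assume "0 < e"
  then obtain k where "inverse (real (Suc k)) < e" using reals_Archimedean by blast
  with assms[of k] show "eventually (\<lambda>n. dist (f n) l < e) F" by (auto elim: eventually_mono)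
qed

lemma PiE_PiE_neqE:
  assumes "h \<in> PiE I (\<lambda>_. PiE J (\<lambda>_. B))" "h' \<in> PiE I (\<lambda>_. PiE J (\<lambda>_. B))" "h \<noteq> h'"
  obtains a s where "a \<in> I" "s \<in> J" "h a s \<noteq> h' a s"
proof -
  obtain a where "a \<in> I" "h a \<noteq> h' a"
    using PiE_ext[OF assms(1,2)] assms(3) by blast
  moreover have "h a \<in> PiE J (\<lambda>_. B)" "h' a \<in> PiE J (\<lambda>_. B)"
    using assms(1,2) \<open>a \<in> I\<close> by auto
  ultimately show ?thesis using PiE_ext[of "h a" J "\<lambda>_. B" "h' a"] that by blast
qed

lemma not_all_le_iff_first_failure:
  fixes P :: "nat \<Rightarrow> bool"
  shows "\<not> (\<forall>s\<le>t. P s) \<longleftrightarrow> (\<exists>s\<le>t. (\<forall>s'<s. P s') \<and> \<not> P s)"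
proof
  assume "\<not> (\<forall>s\<le>t. P s)"
  then obtain s where "s \<le> t" "\<not> P s" by blast
  moreover obtain s0 where "\<not> P s0" "\<forall>s'<s0. P s'"
    using exists_least_iff[of "\<lambda>s. \<not> P s"] calculation by blast
  ultimately show "\<exists>s\<le>t. (\<forall>s'<s. P s') \<and> \<not> P s"
    by (meson not_less order_trans)
qed blast

lemma sgn_mismatch_deviation:
  fixes q y \<delta> :: real
  assumes "0 \<le> q" "0 < y" "\<delta> \<le> y" and "\<not> (\<bar>q - y\<bar> < \<delta> \<and> sgn q = sgn y)"
  shows "\<delta> \<le> \<bar>q - y\<bar>"
  using assms by (auto simp: sgn_if split: if_splits)

definition tracks :: "(nat \<Rightarrow> 'v st \<Rightarrow> real) \<Rightarrow> nat \<Rightarrow> real \<Rightarrow> nat \<Rightarrow> (nat \<Rightarrow> nat \<Rightarrow> 'v st) \<Rightarrow> bool" where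
  "tracks y n \<delta> s h \<longleftrightarrow> (\<forall>x. \<bar>qemp n h s x - y s x\<bar> < \<delta> \<and> sgn (qemp n h s x) = sgn (y s x))"

lemma qemp_nonneg: "0 \<le> qemp n h s x"
  by (simp add: qemp_def)

lemma qemp_cong: "(\<And>a. a < n \<Longrightarrow> h a s = h' a s) \<Longrightarrow> qemp n h s = qemp n h' s"
  unfolding qemp_def by (intro ext) (metis (mono_tags, lifting) Collect_cong)

lemma tracks_cong: "(\<And>a. a < n \<Longrightarrow> h a s = h' a s) \<Longrightarrow> tracks y n \<delta> s h = tracks y n \<delta> s h'"
  unfolding tracks_def using qemp_cong[of n h s h'] by simp

context
  fixes E :: "'v::finite \<Rightarrow> 'v \<Rightarrow> bool" and S T :: 'v and r lam \<rho> \<epsilon> :: real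
    and M :: "'a measure" and X :: "nat \<Rightarrow> nat \<Rightarrow> nat \<Rightarrow> 'a \<Rightarrow> 'v st"
  assumes connected: "graph_connected E" and "S \<noteq> T" and \<epsilon>: "0 < \<epsilon>" "\<epsilon> < 1"
    and "prob_space M" and swarm: "is_foraging_swarm M E S T r lam \<rho> \<epsilon> X"
begin

interpretation prob_space M by fact

abbreviation "ymf \<equiv> mf_y E S T r lam \<rho> \<epsilon>"
abbreviation "Kmf \<equiv> (\<lambda>i. Pf E S T \<epsilon> (snd (mf E S T r lam \<rho> \<epsilon> i)))"
abbreviation "wmf \<equiv> path_weight Kmf (S, C1)"
abbreviation "st_paths s \<equiv> PiE {..s} (\<lambda>_. UNIV :: 'v st set)"

lemma Kmf_nonneg: "0 \<le> Kmf i x z"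
  using \<epsilon> by (intro Pf_nonneg) auto

lemma sum_Kmf: "(\<Sum>x\<in>UNIV. Kmf i x z) = 1"
  by (rule sum_Pf) (rule connected_deg_pos[OF connected \<open>S \<noteq> T\<close>])

lemma ymf_eq_chain_dist: "ymf s = chain_dist Kmf (S, C1) s"
  by (induction s) (simp_all add: mf_y_0 mf_y_Suc)

lemma wmf_nonneg: "0 \<le> wmf s p"
  by (rule path_weight_nonneg[OF Kmf_nonneg])

lemma sum_wmf: "sum (wmf s) (st_paths s) = 1"
  by (rule sum_path_weight[OF sum_Kmf])

lemma sum_wmf_endpoint: "sum (wmf s) {p \<in> st_paths s. p s = x} = ymf s x"
  by (simp add: sum_path_weight_endpoint_eq ymf_eq_chain_dist)

lemma ymf_nonneg: "0 \<le> ymf s x"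
  unfolding sum_wmf_endpoint[symmetric] by (intro sum_nonneg wmf_nonneg)

lemma X_measurable[measurable]: "X n a s \<in> measurable M (count_space UNIV)"
  using swarm unfolding is_foraging_swarm_def by blast

lemma prob_history: "prob {\<omega> \<in> space M. \<forall>a<n. \<forall>s\<le>t. X n a s \<omega> = h a s} = path_prob E S T r lam \<rho> \<epsilon> n t h"
  using swarm unfolding is_foraging_swarm_def by blast

lemma history_in_events: "{\<omega> \<in> space M. \<forall>a<n. \<forall>s\<le>t. X n a s \<omega> = h a s} \<in> events"
  by measurable

lemma disjoint_family_on_histories:
  "disjoint_family_on (\<lambda>h. {\<omega> \<in> space M. \<forall>a<n. \<forall>s\<le>t. X n a s \<omega> = h a s})
     (PiE {..<n} (\<lambda>_. PiE {..t} (\<lambda>_. UNIV :: 'v st set)))"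
  unfolding disjoint_family_on_def
proof (intro ballI impI)
  fix h h' :: "nat \<Rightarrow> nat \<Rightarrow> 'v st"
  assume "h \<in> PiE {..<n} (\<lambda>_. PiE {..t} (\<lambda>_. UNIV))" "h' \<in> PiE {..<n} (\<lambda>_. PiE {..t} (\<lambda>_. UNIV))"
    and "h \<noteq> h'"
  then obtain a s where "a \<in> {..<n}" "s \<in> {..t}" "h a s \<noteq> h' a s"
    by (rule PiE_PiE_neqE)
  then show "{\<omega> \<in> space M. \<forall>a<n. \<forall>s\<le>t. X n a s \<omega> = h a s}
      \<inter> {\<omega> \<in> space M. \<forall>a<n. \<forall>s\<le>t. X n a s \<omega> = h' a s} = {}"
    by auto
qed

lemma prob_history_event:
  assumes local: "\<And>h h'. (\<And>a s. a < n \<Longrightarrow> s \<le> t \<Longrightarrow> h a s = h' a s) \<Longrightarrow> \<Phi> h = \<Phi> h'"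
  shows "{\<omega> \<in> space M. \<Phi> (\<lambda>a s. X n a s \<omega>)} \<in> events"
    and "prob {\<omega> \<in> space M. \<Phi> (\<lambda>a s. X n a s \<omega>)}
       = (\<Sum>h\<in>PiE {..<n} (\<lambda>_. PiE {..t} (\<lambda>_. UNIV)). path_prob E S T r lam \<rho> \<epsilon> n t h * of_bool (\<Phi> h))"
proof -
  define H where "H = {h \<in> PiE {..<n} (\<lambda>_. PiE {..t} (\<lambda>_. UNIV :: 'v st set)). \<Phi> h}"
  define Ev where "Ev h = {\<omega> \<in> space M. \<forall>a<n. \<forall>s\<le>t. X n a s \<omega> = h a s}" for h
  have "finite H"
    unfolding H_def
    by (rule finite_subset[of _ "PiE {..<n} (\<lambda>_. PiE {..t} (\<lambda>_. UNIV))"]) (auto intro!: finite_PiE)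
  have Ev_events: "Ev ` H \<subseteq> events" unfolding Ev_def using history_in_events by blast
  have event_eq: "{\<omega> \<in> space M. \<Phi> (\<lambda>a s. X n a s \<omega>)} = (\<Union>h\<in>H. Ev h)"
  proof (intro equalityI subsetI)
    fix \<omega> assume \<omega>: "\<omega> \<in> {\<omega> \<in> space M. \<Phi> (\<lambda>a s. X n a s \<omega>)}"
    define h where "h = (\<lambda>a\<in>{..<n}. \<lambda>s\<in>{..t}. X n a s \<omega>)"
    have "h \<in> H" "\<omega> \<in> Ev h"
      using \<omega> local[of h "\<lambda>a s. X n a s \<omega>"] by (auto simp: H_def Ev_def h_def)
    then show "\<omega> \<in> (\<Union>h\<in>H. Ev h)" by blast
  next
    fix \<omega> assume "\<omega> \<in> (\<Union>h\<in>H. Ev h)"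
    then obtain h where "h \<in> H" "\<omega> \<in> Ev h" by blast
    then show "\<omega> \<in> {\<omega> \<in> space M. \<Phi> (\<lambda>a s. X n a s \<omega>)}"
      using local[of h "\<lambda>a s. X n a s \<omega>"] by (auto simp: H_def Ev_def)
  qed
  have "disjoint_family_on Ev H"
    unfolding Ev_def H_def by (rule disjoint_family_on_mono[OF _ disjoint_family_on_histories]) auto
  then have "prob {\<omega> \<in> space M. \<Phi> (\<lambda>a s. X n a s \<omega>)} = (\<Sum>h\<in>H. prob (Ev h))"
    unfolding event_eq by (rule finite_measure_finite_Union[OF \<open>finite H\<close> Ev_events])
  also have "\<dots> = (\<Sum>h\<in>H. path_prob E S T r lam \<rho> \<epsilon> n t h)"
    unfolding Ev_def prob_history ..
  also have "\<dots> = (\<Sum>h\<in>PiE {..<n} (\<lambda>_. PiE {..t} (\<lambda>_. UNIV)). path_prob E S T r lam \<rho> \<epsilon> n t h * of_bool (\<Phi> h))"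
    unfolding H_def by (subst sum.inter_filter) (auto intro!: finite_PiE sum.cong)
  finally show "prob {\<omega> \<in> space M. \<Phi> (\<lambda>a s. X n a s \<omega>)} = \<dots>" .
  show "{\<omega> \<in> space M. \<Phi> (\<lambda>a s. X n a s \<omega>)} \<in> events"
    unfolding event_eq using Ev_events \<open>finite H\<close> by (intro sets.finite_UN) auto
qed

lemma path_prob_eq_prod_wmf:
  assumes "\<And>s x. s < t \<Longrightarrow> sgn (qemp n h s x) = sgn (ymf s x)"
  shows "path_prob E S T r lam \<rho> \<epsilon> n t h = (\<Prod>a<n. wmf t (h a))"
proof -
  have "wtraj E S T r lam \<rho> (qemp n h) s = snd (mf E S T r lam \<rho> \<epsilon> s)" if "s < t" for s
    unfolding snd_mf_eq_wtraj by (rule wtraj_cong_sgn) (use assms that in auto)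
  then show ?thesis
    unfolding path_prob_def path_weight_def by (intro prod.cong refl arg_cong2[where f="(*)"]) simp
qed

lemma iid_prob_visits_null_state:
  assumes "ymf s x = 0"
  shows "iid_prob (wmf s) (st_paths s) n (\<lambda>h. \<exists>a<n. h a s = x) = 0"
  by (rule iid_prob_hits_null_set[where A="\<lambda>p. p s = x"])
     (auto simp: finite_PiE wmf_nonneg sum_wmf_endpoint assms)

lemma iid_prob_state_not_tracked:
  assumes \<delta>: "0 < \<delta>" "\<delta> \<le> 1" and gap: "0 < ymf s x \<Longrightarrow> \<delta> \<le> ymf s x"
  shows "iid_prob (wmf s) (st_paths s) n
      (\<lambda>h. \<not> (\<bar>qemp n h s x - ymf s x\<bar> < \<delta> \<and> sgn (qemp n h s x) = sgn (ymf s x)))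
    \<le> 2 * exp (- \<delta>\<^sup>2 / 4) ^ n"
proof (cases "0 < ymf s x")
  case True
  have "iid_prob (wmf s) (st_paths s) n
      (\<lambda>h. \<not> (\<bar>qemp n h s x - ymf s x\<bar> < \<delta> \<and> sgn (qemp n h s x) = sgn (ymf s x)))
    \<le> iid_prob (wmf s) (st_paths s) n
      (\<lambda>h. \<delta> \<le> \<bar>real (card {a. a < n \<and> h a s = x}) / real n - sum (wmf s) {p \<in> st_paths s. p s = x}\<bar>)"
  proof (rule iid_prob_mono)
    fix h assume "\<not> (\<bar>qemp n h s x - ymf s x\<bar> < \<delta> \<and> sgn (qemp n h s x) = sgn (ymf s x))"
    then have "\<delta> \<le> \<bar>qemp n h s x - ymf s x\<bar>"
      using qemp_nonneg[of n h s x] True gap by (intro sgn_mismatch_deviation) auto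
    then show "\<delta> \<le> \<bar>real (card {a. a < n \<and> h a s = x}) / real n - sum (wmf s) {p \<in> st_paths s. p s = x}\<bar>"
      by (simp add: qemp_def sum_wmf_endpoint)
  qed (rule wmf_nonneg)
  also have "\<dots> \<le> 2 * exp (- \<delta>\<^sup>2 / 4) ^ n"
    by (rule iid_prob_deviation) (auto simp: finite_PiE wmf_nonneg sum_wmf \<delta>)
  finally show ?thesis .
next
  case False
  then have "ymf s x = 0" using ymf_nonneg[of s x] by simp
  have "iid_prob (wmf s) (st_paths s) n
      (\<lambda>h. \<not> (\<bar>qemp n h s x - ymf s x\<bar> < \<delta> \<and> sgn (qemp n h s x) = sgn (ymf s x)))
    \<le> iid_prob (wmf s) (st_paths s) n (\<lambda>h. \<exists>a<n. h a s = x)"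
  proof (rule iid_prob_mono)
    fix h assume "\<not> (\<bar>qemp n h s x - ymf s x\<bar> < \<delta> \<and> sgn (qemp n h s x) = sgn (ymf s x))"
    then show "\<exists>a<n. h a s = x"
    proof (rule contrapos_np)
      assume "\<not> (\<exists>a<n. h a s = x)"
      then have "qemp n h s x = 0" by (simp add: qemp_def)
      then show "\<bar>qemp n h s x - ymf s x\<bar> < \<delta> \<and> sgn (qemp n h s x) = sgn (ymf s x)"
        using \<open>ymf s x = 0\<close> \<delta> by simp
    qed
  qed (rule wmf_nonneg)
  also have "\<dots> = 0"
    by (rule iid_prob_visits_null_state) fact
  finally show ?thesis by (rule order_trans) simp
qed

lemma prob_first_failure_le:
  fixes \<delta> :: real and n s :: nat
  assumes \<delta>: "0 < \<delta>" "\<delta> \<le> 1" and gap: "\<And>x. 0 < ymf s x \<Longrightarrow> \<delta> \<le> ymf s x"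
  defines "first_failure \<equiv> \<lambda>h. (\<forall>s'<s. tracks ymf n \<delta> s' h) \<and> \<not> tracks ymf n \<delta> s h"
  shows "{\<omega> \<in> space M. first_failure (\<lambda>a s. X n a s \<omega>)} \<in> events"
    and "prob {\<omega> \<in> space M. first_failure (\<lambda>a s. X n a s \<omega>)} \<le> CARD('v st) * (2 * exp (- \<delta>\<^sup>2 / 4) ^ n)"
proof -
  have local: "first_failure h = first_failure h'"
    if agree: "\<And>a s'. a < n \<Longrightarrow> s' \<le> s \<Longrightarrow> h a s' = h' a s'" for h h'
  proof -
    have "tracks ymf n \<delta> s' h = tracks ymf n \<delta> s' h'" if "s' \<le> s" for s'
      by (rule tracks_cong) (use agree that in auto)
    then show ?thesis unfolding first_failure_def by auto
  qed
  show "{\<omega> \<in> space M. first_failure (\<lambda>a s. X n a s \<omega>)} \<in> events"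
    by (rule prob_history_event(1)) (rule local)
  have "prob {\<omega> \<in> space M. first_failure (\<lambda>a s. X n a s \<omega>)}
      = (\<Sum>h\<in>PiE {..<n} (\<lambda>_. st_paths s). path_prob E S T r lam \<rho> \<epsilon> n s h * of_bool (first_failure h))"
    by (rule prob_history_event(2)) (rule local)
  also have "\<dots> = iid_prob (wmf s) (st_paths s) n first_failure"
    unfolding iid_prob_def
  proof (rule sum.cong[OF refl])
    fix h
    show "path_prob E S T r lam \<rho> \<epsilon> n s h * of_bool (first_failure h)
        = (\<Prod>a<n. wmf s (h a)) * of_bool (first_failure h)"
      by (cases "first_failure h") (auto simp: first_failure_def tracks_def intro!: path_prob_eq_prod_wmf)
  qed
  also have "\<dots> \<le> (\<Sum>x\<in>UNIV. iid_prob (wmf s) (st_paths s) n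
      (\<lambda>h. \<not> (\<bar>qemp n h s x - ymf s x\<bar> < \<delta> \<and> sgn (qemp n h s x) = sgn (ymf s x))))"
    by (rule iid_prob_le_sum) (auto simp: first_failure_def tracks_def wmf_nonneg)
  also have "\<dots> \<le> (\<Sum>x\<in>(UNIV :: 'v st set). 2 * exp (- \<delta>\<^sup>2 / 4) ^ n)"
    by (intro sum_mono iid_prob_state_not_tracked \<delta> gap)
  finally show "prob {\<omega> \<in> space M. first_failure (\<lambda>a s. X n a s \<omega>)}
      \<le> CARD('v st) * (2 * exp (- \<delta>\<^sup>2 / 4) ^ n)"
    by simp
qed

lemma prob_failure_le:
  fixes \<delta> :: real and n t :: nat
  assumes \<delta>: "0 < \<delta>" "\<delta> \<le> 1" and gap: "\<And>s x. s \<le> t \<Longrightarrow> 0 < ymf s x \<Longrightarrow> \<delta> \<le> ymf s x"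
  defines "failure \<equiv> {\<omega> \<in> space M. \<not> (\<forall>s\<le>t. tracks ymf n \<delta> s (\<lambda>a s. X n a s \<omega>))}"
  shows "failure \<in> events"
    and "prob failure \<le> real (Suc t) * (CARD('v st) * (2 * exp (- \<delta>\<^sup>2 / 4) ^ n))"
proof -
  define F where "F s = {\<omega> \<in> space M. (\<forall>s'<s. tracks ymf n \<delta> s' (\<lambda>a s. X n a s \<omega>))
                                      \<and> \<not> tracks ymf n \<delta> s (\<lambda>a s. X n a s \<omega>)}" for s
  have F: "F s \<in> events" "prob (F s) \<le> CARD('v st) * (2 * exp (- \<delta>\<^sup>2 / 4) ^ n)" if "s \<le> t" for s
  proof -
    have "\<And>x. 0 < ymf s x \<Longrightarrow> \<delta> \<le> ymf s x" using gap that by blast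
    from prob_first_failure_le[OF \<delta> this, of n]
    show "F s \<in> events" "prob (F s) \<le> CARD('v st) * (2 * exp (- \<delta>\<^sup>2 / 4) ^ n)"
      unfolding F_def by blast+
  qed
  have "failure = (\<Union>s\<in>{..t}. F s)"
    unfolding failure_def F_def not_all_le_iff_first_failure by blast
  then show "failure \<in> events"
    using F(1) by (simp add: sets.finite_UN)
  have "prob failure \<le> (\<Sum>s\<in>{..t}. prob (F s))"
    unfolding \<open>failure = (\<Union>s\<in>{..t}. F s)\<close> using F(1) by (intro finite_measure_subadditive_finite) auto
  also have "\<dots> \<le> (\<Sum>s\<in>{..t}. CARD('v st) * (2 * exp (- \<delta>\<^sup>2 / 4) ^ n))"
    using F(2) by (intro sum_mono) auto
  finally show "prob failure \<le> real (Suc t) * (CARD('v st) * (2 * exp (- \<delta>\<^sup>2 / 4) ^ n))"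
    by simp
qed

lemma AE_eventually_close_to_mf:
  assumes \<delta>: "0 < \<delta>" "\<delta> \<le> 1" and gap: "\<And>s x. s \<le> t \<Longrightarrow> 0 < ymf s x \<Longrightarrow> \<delta> \<le> ymf s x"
  shows "AE \<omega> in M. eventually (\<lambda>n. \<forall>s\<le>t. \<forall>x. \<bar>qhat X n s \<omega> x - ymf s x\<bar> < \<delta>) sequentially"
proof -
  define B where "B n = {\<omega> \<in> space M. \<not> (\<forall>s\<le>t. tracks ymf n \<delta> s (\<lambda>a s. X n a s \<omega>))}" for n
  define C where "C = real (Suc t) * (real CARD('v st) * 2)"
  have B: "B n \<in> events" "prob (B n) \<le> C * exp (- \<delta>\<^sup>2 / 4) ^ n" for n
    using prob_failure_le[where n=n and t=t, OF \<delta> gap] by (simp_all only: B_def C_def mult.assoc)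
  have "summable (\<lambda>n. C * exp (- \<delta>\<^sup>2 / 4) ^ n)"
    using \<delta> by (intro summable_mult summable_geometric) simp
  then have "summable (\<lambda>n. prob (B n))"
    by (rule summable_comparison_test'[where N=0]) (use B in simp)
  then have "AE \<omega> in M. eventually (\<lambda>n. \<omega> \<in> space M - B n) sequentially"
    by (intro borel_cantelli_AE1[OF B(1)]) (simp_all add: less_top[symmetric])
  then show ?thesis
  proof (rule eventually_mono)
    fix \<omega> assume "eventually (\<lambda>n. \<omega> \<in> space M - B n) sequentially"
    then show "eventually (\<lambda>n. \<forall>s\<le>t. \<forall>x. \<bar>qhat X n s \<omega> x - ymf s x\<bar> < \<delta>) sequentially"
      by (rule eventually_mono) (unfold B_def tracks_def qhat_def, blast)
  qed
qed

lemma AE_qhat_tendsto_mf: "AE \<omega> in M. \<forall>s\<le>t. \<forall>x. (\<lambda>n. qhat X n s \<omega> x) \<longlonglongrightarrow> ymf s x"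
proof -
  obtain \<delta> where "0 < \<delta>" and \<delta>: "\<forall>p\<in>{..t} \<times> UNIV. 0 < case_prod ymf p \<longrightarrow> \<delta> \<le> case_prod ymf p"
    using finite_pos_lower_bound[of "{..t} \<times> UNIV" "case_prod ymf"] by auto
  have gap: "\<delta> \<le> ymf s x" if "s \<le> t" "0 < ymf s x" for s x
    using \<delta>[rule_format, of "(s, x)"] that by simp
  have "AE \<omega> in M. eventually
      (\<lambda>n. \<forall>s\<le>t. \<forall>x. \<bar>qhat X n s \<omega> x - ymf s x\<bar> < min \<delta> (inverse (Suc k))) sequentially"
    for k :: nat
    using \<open>0 < \<delta>\<close> gap by (intro AE_eventually_close_to_mf) (auto simp: min_le_iff_disj inverse_le_1_iff)
  then have "AE \<omega> in M. \<forall>k::nat. eventually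
      (\<lambda>n. \<forall>s\<le>t. \<forall>x. \<bar>qhat X n s \<omega> x - ymf s x\<bar> < min \<delta> (inverse (Suc k))) sequentially"
    by (simp add: AE_all_countable)
  then show ?thesis
  proof (rule eventually_mono, intro allI impI tendstoI_inverse_Suc)
    fix \<omega> s x and k :: nat assume close: "\<forall>k::nat. eventually
      (\<lambda>n. \<forall>s\<le>t. \<forall>x. \<bar>qhat X n s \<omega> x - ymf s x\<bar> < min \<delta> (inverse (Suc k))) sequentially" and "s \<le> t"
    show "eventually (\<lambda>n. dist (qhat X n s \<omega> x) (ymf s x) < inverse (Suc k)) sequentially"
      using close[rule_format, of k]
    proof (rule eventually_mono)
      fix n assume "\<forall>s\<le>t. \<forall>x. \<bar>qhat X n s \<omega> x - ymf s x\<bar> < min \<delta> (inverse (Suc k))"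
      then have "\<bar>qhat X n s \<omega> x - ymf s x\<bar> < min \<delta> (inverse (Suc k))" using \<open>s \<le> t\<close> by blast
      then show "dist (qhat X n s \<omega> x) (ymf s x) < inverse (Suc k)" by (simp add: dist_real_def)
    qed
  qed
qed

end

theorem theorem4:
  fixes E :: "'v::finite \<Rightarrow> 'v \<Rightarrow> bool" and S T :: 'v
    and r lam \<rho> \<epsilon> :: real
    and M :: "'a measure" and X :: "nat \<Rightarrow> nat \<Rightarrow> nat \<Rightarrow> 'a \<Rightarrow> 'v st"
  assumes "sym_graph E" and "graph_connected E" and "has_odd_cycle E"
    and "S \<noteq> T" and "\<not> E S T"
    and "0 < \<rho>" and "\<rho> < 1" and "0 < \<epsilon>" and "\<epsilon> < 1" and "0 < lam" and "lam < 1" and "0 < r"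
    and "prob_space M"
    and "is_foraging_swarm M E S T r lam \<rho> \<epsilon> X"
  shows "\<forall>t. AE \<omega> in M. \<forall>s\<le>t. \<forall>x.
           (\<lambda>n. qhat X n s \<omega> x) \<longlonglongrightarrow> mf_y E S T r lam \<rho> \<epsilon> s x"
  using AE_qhat_tendsto_mf[OF assms(2,4,8,9,13,14)] by blast

end
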